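(* Let $c>0$, $N\ge1$, and let $v=(v_1,\dots,v_N)$ and $Q_i^{jk}=Q_i^{kj}$ ($1\le i,j,k\le N$) be sufficiently regular functions on $\mathcal{K}_{[s_0,s_1]}$. Put $P_i^{jk}:=-\tfrac13 Q_i^{jk}$, $w_i:=v_i+P_i^{jk}(t/s)^2v_jv_k$, $$V_i^0:=\tfrac12\sum_\alpha|\partial_\alpha w_i|^2+\tfrac12c^2w_i^2+P_i^{jk}(t/s)^2v_i\Big(\partial_tv_j\partial_tv_k+\sum_a\partial_av_j\partial_av_k+c^2v_jv_k\Big),$$ $$-V_i^a:=\partial_tw_i\partial_aw_i+P_i^{jk}(t/s)^2v_i\big(\partial_tv_j\partial_av_k+\partial_tv_k\partial_av_j\big),$$ $e_{Q,c}[v]:=2\sum_{i=1}^N\big(V_i^0-(x^a/t)V_i^a\big)$ (summation over repeated $j,k\in\{1,\dots,N\}$ and $a\in\{1,2\}$). There exists $\varepsilon_s>0$ small such that if, pointwise in $\mathcal{K}_{[s_0,s_1]}$, for all $i,j,k$ and $\alpha$, $$|(t/s)^2Q_i^{jk}v_i|+|(t/s)^2Q_i^{jk}v_j|+|(t/s)^2Q_i^{jk}v_k|\le\varepsilon_s,\qquad |(t/s)^2v_j\partial_\alpha Q_i^{jk}|+|(t/s)^2v_k\partial_\alpha Q_i^{jk}|\le\varepsilon_s,$$ then $$\tfrac14 e_{Q,c}[v]\le\sum_{i=1}^Ne_c[v_i]\le 4e_{Q,c}[v].$$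
   Context: Coordinates $(t,x)\in\mathbb{R}^{2+1}$, $r=|x|$, $s=\sqrt{t^2-r^2}$, $\partial_0=\partial_t$. $\mathcal{K}_{[s_0,s_1]}=\{(t,x): t>r+1,\ s_0^2\le t^2-r^2\le s_1^2\}$. For a scalar $u$, $e_c[u]:=|(s/t)\partial_tu|^2+\sum_{a=1,2}|\underline{\partial}_au|^2+c^2u^2$ with $\underline{\partial}_a=(x^a/t)\partial_t+\partial_a$. *)

theory Defs
  imports "HOL-Analysis.Analysis"
begin

type_synonym pt = "real \<times> real \<times> real"

definition tc :: "pt \<Rightarrow> real" where "tc p = fst p"
definition xc :: "nat \<Rightarrow> pt \<Rightarrow> real" where
  "xc a p = (if a = 1 then fst (snd p) else snd (snd p))"
definition rc :: "pt \<Rightarrow> real" where "rc p = sqrt ((xc 1 p)^2 + (xc 2 p)^2)"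
definition sc :: "pt \<Rightarrow> real" where "sc p = sqrt ((tc p)^2 - (rc p)^2)"

definition Kreg :: "real \<Rightarrow> real \<Rightarrow> pt set" where
  "Kreg s0 s1 = {p. tc p > rc p + 1 \<and> s0^2 \<le> (tc p)^2 - (rc p)^2 \<and> (tc p)^2 - (rc p)^2 \<le> s1^2}"

definition evec :: "nat \<Rightarrow> pt" where
  "evec \<alpha> = (if \<alpha> = 0 then (1,0,0) else if \<alpha> = 1 then (0,1,0) else (0,0,1))"

definition pd :: "nat \<Rightarrow> (pt \<Rightarrow> real) \<Rightarrow> pt \<Rightarrow> real" where
  "pd \<alpha> f p = frechet_derivative f (at p) (evec \<alpha>)"

definition ts2 :: "pt \<Rightarrow> real" where "ts2 p = (tc p / sc p)^2"

definition ec :: "real \<Rightarrow> (pt \<Rightarrow> real) \<Rightarrow> pt \<Rightarrow> real" where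
  "ec c u p = ((sc p / tc p) * pd 0 u p)^2
     + (\<Sum>a\<in>{1,2}. ((xc a p / tc p) * pd 0 u p + pd a u p)^2) + c^2 * (u p)^2"

definition Pc :: "(nat \<Rightarrow> nat \<Rightarrow> nat \<Rightarrow> pt \<Rightarrow> real) \<Rightarrow> nat \<Rightarrow> nat \<Rightarrow> nat \<Rightarrow> pt \<Rightarrow> real" where
  "Pc Q i j k p = - (1/3) * Q i j k p"

definition wf :: "nat \<Rightarrow> (nat \<Rightarrow> pt \<Rightarrow> real) \<Rightarrow> (nat \<Rightarrow> nat \<Rightarrow> nat \<Rightarrow> pt \<Rightarrow> real) \<Rightarrow> nat \<Rightarrow> pt \<Rightarrow> real" where
  "wf N v Q i p = v i p + (\<Sum>j\<in>{1..N}. \<Sum>k\<in>{1..N}. Pc Q i j k p * ts2 p * v j p * v k p)"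

definition V0 :: "nat \<Rightarrow> real \<Rightarrow> (nat \<Rightarrow> pt \<Rightarrow> real) \<Rightarrow> (nat \<Rightarrow> nat \<Rightarrow> nat \<Rightarrow> pt \<Rightarrow> real) \<Rightarrow> nat \<Rightarrow> pt \<Rightarrow> real" where
  "V0 N c v Q i p = (1/2) * (\<Sum>\<alpha>\<in>{0,1,2}. (pd \<alpha> (wf N v Q i) p)^2) + (1/2) * c^2 * (wf N v Q i p)^2
     + (\<Sum>j\<in>{1..N}. \<Sum>k\<in>{1..N}. Pc Q i j k p * ts2 p * v i p *
          (pd 0 (v j) p * pd 0 (v k) p + (\<Sum>a\<in>{1,2}. pd a (v j) p * pd a (v k) p) + c^2 * v j p * v k p))"

text \<open>Va a = V_i^a (note the paper defines -V_i^a).\<close>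
definition Va :: "nat \<Rightarrow> (nat \<Rightarrow> pt \<Rightarrow> real) \<Rightarrow> (nat \<Rightarrow> nat \<Rightarrow> nat \<Rightarrow> pt \<Rightarrow> real) \<Rightarrow> nat \<Rightarrow> nat \<Rightarrow> pt \<Rightarrow> real" where
  "Va N v Q i a p = - (pd 0 (wf N v Q i) p * pd a (wf N v Q i) p
     + (\<Sum>j\<in>{1..N}. \<Sum>k\<in>{1..N}. Pc Q i j k p * ts2 p * v i p *
          (pd 0 (v j) p * pd a (v k) p + pd 0 (v k) p * pd a (v j) p)))"

definition eQc :: "nat \<Rightarrow> real \<Rightarrow> (nat \<Rightarrow> nat \<Rightarrow> nat \<Rightarrow> pt \<Rightarrow> real) \<Rightarrow> (nat \<Rightarrow> pt \<Rightarrow> real) \<Rightarrow> pt \<Rightarrow> real" where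
  "eQc N c Q v p = 2 * (\<Sum>i\<in>{1..N}. V0 N c v Q i p - (\<Sum>a\<in>{1,2}. (xc a p / tc p) * Va N v Q i a p))"

end

(* At a point of the hyperboloidal region put sigma = s/t and xi_a = x^a/t, so that
   sigma^2 + xi_1^2 + xi_2^2 = 1, and let L (a, b_1, b_2, u) = (sigma a, xi_1 a + b_1, xi_2 a + b_2, c u).
   Then e_c[u] = |L (d_t u, d_1 u, d_2 u, u)|^2, and since sigma^2 = 1 - |xi|^2 the quantity
   2 (V_i^0 - xi_a V_i^a) equals |L (jet w_i)|^2 + sum_{j,k} 2 P_i^{jk} (t/s)^2 v_i <L (jet v_j), L (jet v_k)>.
   By the product rule L (jet w_i) - L (jet v_i) is a combination of the vectors L (jet v_j) whose
   coefficients are controlled by the smallness hypotheses; this uses |d (t/s)^2| <= 2 (t/s)^2, which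
   holds because s^2 >= t + r when t > r + 1.  Both error terms are therefore small multiples of
   sum_i e_c[v_i], and |x + y|^2 <= 2 |x|^2 + 2 |y|^2 gives the two-sided bound with constant 4. *)

theory Submission
  imports Defs
begin

lemma pd_eq_derivative:
  assumes "(f has_derivative f') (at p)"
  shows "pd \<alpha> f p = f' (evec \<alpha>)"
  using frechet_derivative_at[OF assms] unfolding pd_def by simp

lemma pd_add:
  assumes "f differentiable (at p)" "g differentiable (at p)"
  shows "pd \<alpha> (\<lambda>q. f q + g q) p = pd \<alpha> f p + pd \<alpha> g p"
  using pd_eq_derivative[OF has_derivative_add[OF assms[THEN frechet_derivative_works[THEN iffD1]]]]
  by (simp add: pd_def)

lemma pd_mult:
  assumes "f differentiable (at p)" "g differentiable (at p)"
  shows "pd \<alpha> (\<lambda>q. f q * g q :: real) p = g p * pd \<alpha> f p + f p * pd \<alpha> g p"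
  using pd_eq_derivative[OF has_derivative_mult[OF assms[THEN frechet_derivative_works[THEN iffD1]]]]
  by (simp add: pd_def)

lemma pd_cmult:
  assumes "f differentiable (at p)"
  shows "pd \<alpha> (\<lambda>q. a * f q :: real) p = a * pd \<alpha> f p"
  using pd_eq_derivative[OF has_derivative_mult_right[OF assms[THEN frechet_derivative_works[THEN iffD1]]]]
  by (simp add: pd_def)

lemma pd_sum:
  assumes "finite A" "\<And>j. j \<in> A \<Longrightarrow> f j differentiable (at p)"
  shows "pd \<alpha> (\<lambda>q. \<Sum>j\<in>A. f j q :: real) p = (\<Sum>j\<in>A. pd \<alpha> (f j) p)"
proof -
  have "((\<lambda>q. \<Sum>j\<in>A. f j q) has_derivative (\<lambda>h. \<Sum>j\<in>A. frechet_derivative (f j) (at p) h)) (at p)"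
    using assms by (intro has_derivative_sum frechet_derivative_works[THEN iffD1]) auto
  from pd_eq_derivative[OF this] show ?thesis by (simp add: pd_def)
qed

type_synonym R4 = "real \<times> real \<times> real \<times> real"

definition jet :: "(pt \<Rightarrow> real) \<Rightarrow> pt \<Rightarrow> R4" where
  "jet f p = (pd 0 f p, pd 1 f p, pd 2 f p, f p)"

definition djet :: "(pt \<Rightarrow> real) \<Rightarrow> pt \<Rightarrow> R4" where
  "djet f p = (pd 0 f p, pd 1 f p, pd 2 f p, 0)"

lemma jet_add:
  assumes "f differentiable (at p)" "g differentiable (at p)"
  shows "jet (\<lambda>q. f q + g q) p = jet f p + jet g p"
  using assms by (simp add: jet_def pd_add)

lemma jet_sum:
  assumes "finite A" "\<And>j. j \<in> A \<Longrightarrow> f j differentiable (at p)"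
  shows "jet (\<lambda>q. \<Sum>j\<in>A. f j q) p = (\<Sum>j\<in>A. jet (f j) p)"
  using assms by (simp add: jet_def pd_sum prod_eq_iff fst_sum snd_sum)

lemma jet_mult:
  assumes "f differentiable (at p)" "g differentiable (at p)"
  shows "jet (\<lambda>q. f q * g q) p = g p *\<^sub>R jet f p + f p *\<^sub>R djet g p"
  using assms by (simp add: jet_def djet_def pd_mult)

definition s2 :: "pt \<Rightarrow> real" where
  "s2 q = (tc q)^2 - (xc 1 q)^2 - (xc 2 q)^2"

lemma s2_eq: "s2 q = (tc q)^2 - (rc q)^2"
  by (simp add: s2_def rc_def)

lemma ts2_eq: "s2 q > 0 \<Longrightarrow> ts2 q = (tc q)^2 / s2 q"
  by (simp add: ts2_def sc_def s2_eq power_divide)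

lemma abs_xc_le_rc: "\<bar>xc a q\<bar> \<le> rc q"
  unfolding rc_def xc_def by (auto intro: real_le_rsqrt)

lemma Kreg_rc_lt: "q \<in> Kreg s0 s1 \<Longrightarrow> rc q + 1 < tc q"
  by (simp add: Kreg_def)

lemma Kreg_s2_ge:
  assumes "q \<in> Kreg s0 s1"
  shows "tc q + rc q \<le> s2 q"
proof -
  have "0 \<le> rc q" by (simp add: rc_def)
  moreover have "1 * (tc q + rc q) \<le> (tc q - rc q) * (tc q + rc q)"
    using Kreg_rc_lt[OF assms] \<open>0 \<le> rc q\<close> by (intro mult_right_mono) auto
  ultimately show ?thesis by (simp add: s2_eq power2_eq_square algebra_simps)
qed

lemma Kreg_pos:
  assumes "q \<in> Kreg s0 s1"
  shows "tc q > 0" "s2 q > 0" "sc q > 0" "ts2 q > 0"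
proof -
  have "0 \<le> rc q" by (simp add: rc_def)
  then show t: "tc q > 0" and s: "s2 q > 0"
    using Kreg_rc_lt[OF assms] Kreg_s2_ge[OF assms] by linarith+
  then show "sc q > 0" by (simp add: sc_def flip: s2_eq)
  show "ts2 q > 0" using t s by (simp add: ts2_eq)
qed

lemma Kreg_frame_sq_sum:
  assumes "q \<in> Kreg s0 s1"
  shows "(sc q / tc q)^2 + (xc 1 q / tc q)^2 + (xc 2 q / tc q)^2 = 1"
  using Kreg_pos[OF assms] by (simp add: sc_def power_divide s2_def field_simps flip: s2_eq)

lemma s2_has_derivative:
  "(s2 has_derivative (\<lambda>h. 2 * (tc h * tc p - xc 1 h * xc 1 p - xc 2 h * xc 2 p))) (at p)"
  unfolding s2_def tc_def xc_def by (auto intro!: derivative_eq_intros)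

lemma ts2_has_derivative:
  assumes "s2 p > 0"
  shows "(ts2 has_derivative
    (\<lambda>h. 2 * tc p * (tc h * s2 p - tc p * (tc h * tc p - xc 1 h * xc 1 p - xc 2 h * xc 2 p)) / (s2 p)^2)) (at p)"
proof -
  have "((\<lambda>q. (tc q)^2 / s2 q) has_derivative
    (\<lambda>h. 2 * tc p * (tc h * s2 p - tc p * (tc h * tc p - xc 1 h * xc 1 p - xc 2 h * xc 2 p)) / (s2 p)^2)) (at p)"
    using assms unfolding tc_def
    by (auto intro!: derivative_eq_intros s2_has_derivative[unfolded tc_def] simp: field_simps power2_eq_square)
  moreover have "open {q. s2 q > 0}"
    by (rule open_Collect_less) (auto simp: s2_def tc_def xc_def intro!: continuous_intros)
  ultimately show ?thesis
    by (rule has_derivative_transform_within_open) (use assms in \<open>auto simp: ts2_eq\<close>)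
qed

lemma abs_pd_ts2_le:
  assumes "p \<in> Kreg s0 s1"
  shows "\<bar>pd \<alpha> ts2 p\<bar> \<le> 2 * ts2 p"
proof -
  define t G where "t = tc p" and "G = s2 p"
  have t: "t > 0" and G: "G > 0" and ts2: "ts2 p = t^2 / G"
    using Kreg_pos[OF assms] by (simp_all add: t_def G_def ts2_eq)
  have rG: "rc p \<le> G" and rt: "rc p \<le> t"
    using Kreg_s2_ge[OF assms] Kreg_rc_lt[OF assms] t unfolding t_def G_def by linarith+
  have xG: "\<bar>xc a p\<bar> \<le> G" for a using abs_xc_le_rc[of a p] rG by linarith
  have pd: "pd \<alpha> ts2 p = 2 * t * (tc (evec \<alpha>) * G - t * (tc (evec \<alpha>) * t
      - xc 1 (evec \<alpha>) * xc 1 p - xc 2 (evec \<alpha>) * xc 2 p)) / G^2"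
    unfolding t_def G_def by (rule pd_eq_derivative[OF ts2_has_derivative]) (use G t_def G_def in simp)
  consider "\<alpha> = 0" | "\<alpha> = 1" | "\<alpha> \<noteq> 0" "\<alpha> \<noteq> 1" by blast
  then show ?thesis
  proof cases
    case 1
    have "pd \<alpha> ts2 p = - 2 * t * (rc p)^2 / G^2"
      using 1 unfolding pd by (simp add: evec_def tc_def xc_def s2_eq t_def G_def power2_eq_square algebra_simps flip: minus_divide_left)
    then have "\<bar>pd \<alpha> ts2 p\<bar> = 2 * t * (rc p * rc p) / G^2"
      using t by (simp add: abs_mult power2_eq_square)
    also have "\<dots> \<le> 2 * t * (t * G) / G^2"
      using t rG rt by (intro divide_right_mono mult_left_mono mult_mono) (auto simp: rc_def)
    finally show ?thesis using G by (simp add: ts2 power2_eq_square)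
  next
    case 2
    have "\<bar>pd \<alpha> ts2 p\<bar> = 2 * t^2 * \<bar>xc 1 p\<bar> / G^2"
      using 2 unfolding pd by (simp add: evec_def tc_def xc_def abs_mult power2_eq_square)
    also have "\<dots> \<le> 2 * t^2 * G / G^2" using xG by (intro divide_right_mono mult_left_mono) auto
    finally show ?thesis using G by (simp add: ts2 power2_eq_square)
  next
    case 3
    have "\<bar>pd \<alpha> ts2 p\<bar> = 2 * t^2 * \<bar>xc 2 p\<bar> / G^2"
      using 3 unfolding pd by (simp add: evec_def tc_def xc_def abs_mult power2_eq_square)
    also have "\<dots> \<le> 2 * t^2 * G / G^2" using xG by (intro divide_right_mono mult_left_mono) auto
    finally show ?thesis using G by (simp add: ts2 power2_eq_square)
  qed
qed

definition energy_map :: "real \<Rightarrow> real \<Rightarrow> real \<Rightarrow> real \<Rightarrow> R4 \<Rightarrow> R4" where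
  "energy_map \<sigma> \<xi>1 \<xi>2 c y =
    (\<sigma> * fst y, \<xi>1 * fst y + fst (snd y), \<xi>2 * fst y + fst (snd (snd y)), c * snd (snd (snd y)))"

abbreviation energy_frame :: "real \<Rightarrow> pt \<Rightarrow> R4 \<Rightarrow> R4" where
  "energy_frame c p \<equiv> energy_map (sc p / tc p) (xc 1 p / tc p) (xc 2 p / tc p) c"

lemma linear_energy_map: "linear (energy_map \<sigma> \<xi>1 \<xi>2 c)"
  by (rule linearI) (auto simp: energy_map_def algebra_simps)

lemma inner_energy_map:
  assumes "\<sigma>^2 + \<xi>1^2 + \<xi>2^2 = 1"
  shows "inner (energy_map \<sigma> \<xi>1 \<xi>2 c (a, b1, b2, u)) (energy_map \<sigma> \<xi>1 \<xi>2 c (a', b1', b2', u')) =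
    a * a' + b1 * b1' + b2 * b2' + c^2 * u * u' + \<xi>1 * (a * b1' + a' * b1) + \<xi>2 * (a * b2' + a' * b2)"
proof -
  have "\<sigma> * a * (\<sigma> * a') = \<sigma>^2 * (a * a')" by (simp add: power2_eq_square algebra_simps)
  also have "\<dots> = (1 - \<xi>1^2 - \<xi>2^2) * (a * a')"
    using assms by (simp add: eq_diff_eq)
  finally have \<sigma>: "\<sigma> * a * (\<sigma> * a') = (1 - \<xi>1^2 - \<xi>2^2) * (a * a')" .
  have "inner (energy_map \<sigma> \<xi>1 \<xi>2 c (a, b1, b2, u)) (energy_map \<sigma> \<xi>1 \<xi>2 c (a', b1', b2', u')) =
      \<sigma> * a * (\<sigma> * a') + (\<xi>1 * a + b1) * (\<xi>1 * a' + b1') + (\<xi>2 * a + b2) * (\<xi>2 * a' + b2')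
      + c * u * (c * u')"
    by (simp add: energy_map_def)
  then show ?thesis unfolding \<sigma> by (simp add: algebra_simps power2_eq_square)
qed

lemma ec_eq_norm_energy_frame: "ec c u p = (norm (energy_frame c p (jet u p)))^2"
  unfolding power2_norm_eq_inner by (simp add: ec_def energy_map_def jet_def power2_eq_square)

lemma norm_energy_map_djet_le:
  "norm (energy_map \<sigma> \<xi>1 \<xi>2 c (a, b1, b2, 0)) \<le> norm (energy_map \<sigma> \<xi>1 \<xi>2 c (a, b1, b2, u))"
  by (simp add: energy_map_def norm_le)

lemma abs_le_norm_energy_map:
  assumes "c \<ge> 0"
  shows "c * \<bar>u\<bar> \<le> norm (energy_map \<sigma> \<xi>1 \<xi>2 c (a, b1, b2, u))"
proof -
  have "norm (c * u) \<le> norm (energy_map \<sigma> \<xi>1 \<xi>2 c (a, b1, b2, u))"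
    unfolding energy_map_def fst_conv snd_conv
    using norm_snd_le[of "c * u" "\<xi>2 * a + b2"] norm_snd_le[of "(\<xi>2 * a + b2, c * u)" "\<xi>1 * a + b1"]
      norm_snd_le[of "(\<xi>1 * a + b1, \<xi>2 * a + b2, c * u)" "\<sigma> * a"]
    by linarith
  then show ?thesis using assms by (simp add: abs_mult)
qed

lemma norm_energy_map_le:
  assumes "0 \<le> \<sigma>" "\<sigma> \<le> 1" "\<bar>\<xi>1\<bar> \<le> 1" "\<bar>\<xi>2\<bar> \<le> 1" "c \<ge> 0"
    and "\<bar>a\<bar> \<le> B" "\<bar>b1\<bar> \<le> B" "\<bar>b2\<bar> \<le> B" "\<bar>u\<bar> \<le> B"
  shows "norm (energy_map \<sigma> \<xi>1 \<xi>2 c (a, b1, b2, u)) \<le> (5 + c) * B"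
proof -
  have norm4: "norm (w, x, y, z) \<le> \<bar>w\<bar> + \<bar>x\<bar> + \<bar>y\<bar> + \<bar>z\<bar>" for w x y z :: real
    using norm_Pair_le[of w "(x, y, z)"] norm_Pair_le[of x "(y, z)"] norm_Pair_le[of y z] by simp
  have "norm (energy_map \<sigma> \<xi>1 \<xi>2 c (a, b1, b2, u))
      \<le> \<bar>\<sigma> * a\<bar> + \<bar>\<xi>1 * a + b1\<bar> + \<bar>\<xi>2 * a + b2\<bar> + \<bar>c * u\<bar>"
    unfolding energy_map_def using norm4 by simp
  also have "\<dots> \<le> \<bar>\<sigma> * a\<bar> + (\<bar>\<xi>1 * a\<bar> + \<bar>b1\<bar>) + (\<bar>\<xi>2 * a\<bar> + \<bar>b2\<bar>) + \<bar>c * u\<bar>"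
    by (intro add_mono abs_triangle_ineq order_refl)
  also have "\<dots> \<le> B + (B + B) + (B + B) + c * B"
    using assms by (intro add_mono) (auto simp: abs_mult intro: order_trans[OF mult_left_le_one_le] mult_left_mono)
  finally show ?thesis by (simp add: algebra_simps)
qed

lemma norm_add_sq_le: "(norm (x + y))^2 \<le> 2 * (norm x)^2 + 2 * (norm y)^2"
proof -
  have "(norm (x + y))^2 \<le> (norm x + norm y)^2"
    by (intro power_mono norm_triangle_ineq) simp
  also have "\<dots> \<le> 2 * (norm x)^2 + 2 * (norm y)^2"
    using zero_le_square[of "norm x - norm y"] by (simp add: power2_eq_square algebra_simps)
  finally show ?thesis .
qed

lemma norm_double_sum_le:
  assumes "finite I" and "\<And>j k. j \<in> I \<Longrightarrow> k \<in> I \<Longrightarrow> norm (F j k) \<le> a * g j + b * g k"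
  shows "norm (\<Sum>j\<in>I. \<Sum>k\<in>I. F j k) \<le> (a + b) * card I * (\<Sum>j\<in>I. g j)"
proof -
  have "norm (\<Sum>j\<in>I. \<Sum>k\<in>I. F j k) \<le> (\<Sum>j\<in>I. \<Sum>k\<in>I. norm (F j k))"
    by (intro order_trans[OF norm_sum] sum_mono norm_sum)
  also have "\<dots> \<le> (\<Sum>j\<in>I. \<Sum>k\<in>I. a * g j + b * g k)"
    using assms(2) by (intro sum_mono) auto
  also have "\<dots> = (a + b) * card I * (\<Sum>j\<in>I. g j)"
    by (simp add: sum.distrib sum_distrib_left sum_distrib_right algebra_simps flip: sum_distrib_left)
  finally show ?thesis .
qed

lemma abs_double_sum_inner_le:
  fixes Z :: "'i \<Rightarrow> 'a::real_inner"
  assumes "\<And>j k. j \<in> I \<Longrightarrow> k \<in> I \<Longrightarrow> \<bar>\<rho> j k\<bar> \<le> \<epsilon>"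
  shows "\<bar>\<Sum>j\<in>I. \<Sum>k\<in>I. \<rho> j k * inner (Z j) (Z k)\<bar> \<le> \<epsilon> * (\<Sum>j\<in>I. norm (Z j))^2"
proof -
  have "\<bar>\<Sum>j\<in>I. \<Sum>k\<in>I. \<rho> j k * inner (Z j) (Z k)\<bar> \<le> (\<Sum>j\<in>I. \<Sum>k\<in>I. \<bar>\<rho> j k * inner (Z j) (Z k)\<bar>)"
    by (intro order_trans[OF sum_abs] sum_mono sum_abs)
  also have "\<dots> \<le> (\<Sum>j\<in>I. \<Sum>k\<in>I. \<epsilon> * (norm (Z j) * norm (Z k)))"
    unfolding abs_mult using assms
    by (intro sum_mono mult_mono) (auto simp: Cauchy_Schwarz_ineq2 intro: order_trans[OF abs_ge_zero])
  also have "\<dots> = \<epsilon> * (\<Sum>j\<in>I. norm (Z j))^2"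
    unfolding power2_eq_square sum_product by (simp add: sum_distrib_left)
  finally show ?thesis .
qed

lemma sum_norm_sq_le_of_norm_le:
  fixes R :: "'i \<Rightarrow> 'a::real_normed_vector" and Z :: "'i \<Rightarrow> 'b::real_normed_vector" and \<delta> :: real
  assumes "finite I" and "\<And>i. i \<in> I \<Longrightarrow> norm (R i) \<le> \<delta> * (\<Sum>j\<in>I. norm (Z j))"
  shows "(\<Sum>i\<in>I. (norm (R i))^2) \<le> (card I * \<delta>)^2 * (\<Sum>i\<in>I. (norm (Z i))^2)"
proof -
  have "(\<Sum>i\<in>I. (norm (R i))^2) \<le> (\<Sum>i\<in>I. (\<delta> * (\<Sum>j\<in>I. norm (Z j)))^2)"
    using assms(2) by (intro sum_mono power_mono) auto
  also have "\<dots> = card I * \<delta>^2 * (\<Sum>j\<in>I. norm (Z j))^2" by (simp add: power_mult_distrib)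
  also have "\<dots> \<le> card I * \<delta>^2 * (card I * (\<Sum>i\<in>I. (norm (Z i))^2))"
    using sum_squared_le_sum_of_squares[of "\<lambda>j. norm (Z j)" I] assms(1)
    by (intro mult_left_mono) (auto simp: mult.commute)
  also have "\<dots> = (card I * \<delta>)^2 * (\<Sum>i\<in>I. (norm (Z i))^2)" by (simp add: power2_eq_square)
  finally show ?thesis .
qed

lemma abs_sum_le_of_abs_le_sq_sum_norm:
  fixes Z :: "'i \<Rightarrow> 'a::real_normed_vector" and \<eta> :: real
  assumes "finite I" "0 \<le> \<eta>" and "\<And>i. i \<in> I \<Longrightarrow> \<bar>B i\<bar> \<le> \<eta> * (\<Sum>j\<in>I. norm (Z j))^2"
  shows "\<bar>\<Sum>i\<in>I. B i\<bar> \<le> (card I)^2 * \<eta> * (\<Sum>i\<in>I. (norm (Z i))^2)"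
proof -
  have "\<bar>\<Sum>i\<in>I. B i\<bar> \<le> (\<Sum>i\<in>I. \<eta> * (\<Sum>j\<in>I. norm (Z j))^2)"
    using assms(3) by (intro order_trans[OF sum_abs] sum_mono) auto
  also have "\<dots> = card I * \<eta> * (\<Sum>j\<in>I. norm (Z j))^2" by simp
  also have "\<dots> \<le> card I * \<eta> * (card I * (\<Sum>i\<in>I. (norm (Z i))^2))"
    using sum_squared_le_sum_of_squares[of "\<lambda>j. norm (Z j)" I] assms(1,2)
    by (intro mult_left_mono) (auto simp: mult.commute)
  also have "\<dots> = (card I)^2 * \<eta> * (\<Sum>i\<in>I. (norm (Z i))^2)" by (simp add: power2_eq_square)
  finally show ?thesis .
qed

lemma energy_equiv_of_small_perturbation:
  fixes Z W :: "'i \<Rightarrow> 'a::real_inner" and B :: "'i \<Rightarrow> real" and \<delta> \<eta> :: real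
  assumes "finite I" and "0 \<le> \<delta>" "8 * card I * \<delta> \<le> 1" and "0 \<le> \<eta>" "8 * (card I)^2 * \<eta> \<le> 1"
    and WZ: "\<And>i. i \<in> I \<Longrightarrow> norm (W i - Z i) \<le> \<delta> * (\<Sum>j\<in>I. norm (Z j))"
    and B: "\<And>i. i \<in> I \<Longrightarrow> \<bar>B i\<bar> \<le> \<eta> * (\<Sum>j\<in>I. norm (Z j))^2"
  shows "(1/4) * (\<Sum>i\<in>I. (norm (W i))^2 + B i) \<le> (\<Sum>i\<in>I. (norm (Z i))^2)
    \<and> (\<Sum>i\<in>I. (norm (Z i))^2) \<le> 4 * (\<Sum>i\<in>I. (norm (W i))^2 + B i)"
proof -
  define E where "E = (\<Sum>i\<in>I. (norm (Z i))^2)"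
  have "E \<ge> 0" unfolding E_def by (simp add: sum_nonneg)
  have "(card I * \<delta>)^2 * E \<le> (1/8)^2 * E"
    using assms(2,3) \<open>E \<ge> 0\<close> by (intro mult_right_mono power_mono) auto
  then have R: "(\<Sum>i\<in>I. (norm (W i - Z i))^2) \<le> E / 64"
    using sum_norm_sq_le_of_norm_le[where R = "\<lambda>i. W i - Z i", OF assms(1) WZ] unfolding E_def by (simp add: power_divide)
  have "(card I)^2 * \<eta> * E \<le> (1/8) * E"
    using assms(5) \<open>E \<ge> 0\<close> by (intro mult_right_mono) auto
  then have B_sum: "\<bar>\<Sum>i\<in>I. B i\<bar> \<le> E / 8"
    using abs_sum_le_of_abs_le_sq_sum_norm[where B = B and Z = Z, OF assms(1,4) B] unfolding E_def by simp
  have W_le: "(\<Sum>i\<in>I. (norm (W i))^2) \<le> 2 * E + 2 * (\<Sum>i\<in>I. (norm (W i - Z i))^2)"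
    using norm_add_sq_le[of "Z i" "W i - Z i" for i]
    unfolding E_def by (auto simp: sum_distrib_left simp flip: sum.distrib intro: sum_mono)
  have Z_le: "E \<le> 2 * (\<Sum>i\<in>I. (norm (W i))^2) + 2 * (\<Sum>i\<in>I. (norm (W i - Z i))^2)"
    using norm_add_sq_le[of "W i" "Z i - W i" for i]
    unfolding E_def by (auto simp: sum_distrib_left norm_minus_commute simp flip: sum.distrib intro: sum_mono)
  show ?thesis
    using R B_sum W_le Z_le \<open>E \<ge> 0\<close> unfolding E_def by (simp add: sum.distrib) linarith
qed

lemma ts2_differentiable:
  assumes "s2 p > 0"
  shows "ts2 differentiable (at p)"
  unfolding differentiable_def by (intro exI) (rule ts2_has_derivative[OF assms])

lemma Pc_eq: "Pc Q i j k = (\<lambda>q. - (1/3) * Q i j k q)"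
  by (simp add: Pc_def fun_eq_iff)

lemma Pc_differentiable: "Q i j k differentiable (at p) \<Longrightarrow> Pc Q i j k differentiable (at p)"
  unfolding Pc_eq by (intro differentiable_mult differentiable_const)

lemma pd_Pc: "Q i j k differentiable (at p) \<Longrightarrow> pd \<alpha> (Pc Q i j k) p = - (1/3) * pd \<alpha> (Q i j k) p"
  unfolding Pc_eq by (rule pd_cmult)

lemma jet_wf:
  assumes "s2 p > 0" and v: "\<And>j. j \<in> {1..N} \<Longrightarrow> v j differentiable (at p)"
    and Q: "\<And>j k. j \<in> {1..N} \<Longrightarrow> k \<in> {1..N} \<Longrightarrow> Q i j k differentiable (at p)"
    and i: "i \<in> {1..N}"
  shows "jet (wf N v Q i) p = jet (v i) p + (\<Sum>j\<in>{1..N}. \<Sum>k\<in>{1..N}.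
      (Pc Q i j k p * ts2 p * v k p) *\<^sub>R djet (v j) p + (Pc Q i j k p * ts2 p * v j p) *\<^sub>R djet (v k) p
      + (v j p * v k p) *\<^sub>R jet (\<lambda>q. Pc Q i j k q * ts2 q) p)"
proof -
  have PT: "(\<lambda>q. Pc Q i j k q * ts2 q) differentiable (at p)" if "j \<in> {1..N}" "k \<in> {1..N}" for j k
    using Q[OF that] assms(1) by (intro differentiable_mult Pc_differentiable ts2_differentiable)
  have PTv: "(\<lambda>q. Pc Q i j k q * ts2 q * v j q) differentiable (at p)"
    if "j \<in> {1..N}" "k \<in> {1..N}" for j k
    using differentiable_mult[OF PT[OF that] v[OF that(1)]] .
  have prod_diff: "(\<lambda>q. Pc Q i j k q * ts2 q * v j q * v k q) differentiable (at p)"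
    if "j \<in> {1..N}" "k \<in> {1..N}" for j k
    using differentiable_mult[OF PTv[OF that] v[OF that(2)]] .
  have sum_diff: "(\<lambda>q. \<Sum>k\<in>{1..N}. Pc Q i j k q * ts2 q * v j q * v k q) differentiable (at p)"
    if "j \<in> {1..N}" for j
    using prod_diff that by (intro differentiable_sum) auto
  have sum_sum_diff:
    "(\<lambda>q. \<Sum>j\<in>{1..N}. \<Sum>k\<in>{1..N}. Pc Q i j k q * ts2 q * v j q * v k q) differentiable (at p)"
    using sum_diff by (intro differentiable_sum) auto
  have term_eq: "jet (\<lambda>q. Pc Q i j k q * ts2 q * v j q * v k q) p
      = (Pc Q i j k p * ts2 p * v k p) *\<^sub>R djet (v j) p + (Pc Q i j k p * ts2 p * v j p) *\<^sub>R djet (v k) p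
        + (v j p * v k p) *\<^sub>R jet (\<lambda>q. Pc Q i j k q * ts2 q) p"
    if j: "j \<in> {1..N}" and k: "k \<in> {1..N}" for j k
    using jet_mult[OF PTv[OF j k] v[OF k]] jet_mult[OF PT[OF j k] v[OF j]]
    by (simp add: algebra_simps)
  have wf_eq: "wf N v Q i = (\<lambda>q. v i q + (\<Sum>j\<in>{1..N}. \<Sum>k\<in>{1..N}. Pc Q i j k q * ts2 q * v j q * v k q))"
    by (simp add: wf_def fun_eq_iff)
  have "jet (\<lambda>q. \<Sum>j\<in>{1..N}. \<Sum>k\<in>{1..N}. Pc Q i j k q * ts2 q * v j q * v k q) p
    = (\<Sum>j\<in>{1..N}. jet (\<lambda>q. \<Sum>k\<in>{1..N}. Pc Q i j k q * ts2 q * v j q * v k q) p)"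
    by (rule jet_sum) (use sum_diff in auto)
  also have "\<dots> = (\<Sum>j\<in>{1..N}. \<Sum>k\<in>{1..N}. jet (\<lambda>q. Pc Q i j k q * ts2 q * v j q * v k q) p)"
    by (intro sum.cong refl jet_sum) (use prod_diff in auto)
  also have "\<dots> = (\<Sum>j\<in>{1..N}. \<Sum>k\<in>{1..N}.
      (Pc Q i j k p * ts2 p * v k p) *\<^sub>R djet (v j) p + (Pc Q i j k p * ts2 p * v j p) *\<^sub>R djet (v k) p
      + (v j p * v k p) *\<^sub>R jet (\<lambda>q. Pc Q i j k q * ts2 q) p)"
    using term_eq by simp
  finally show ?thesis
    unfolding wf_eq jet_add[OF v[OF i] sum_sum_diff] by simp
qed

lemma V_combination_eq_energy_map:
  assumes "\<sigma>^2 + \<xi>1^2 + \<xi>2^2 = 1" and "\<xi>1 = xc 1 p / tc p" "\<xi>2 = xc 2 p / tc p"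
  shows "2 * (V0 N c v Q i p - (\<Sum>a\<in>{1,2}. xc a p / tc p * Va N v Q i a p))
    = (norm (energy_map \<sigma> \<xi>1 \<xi>2 c (jet (wf N v Q i) p)))^2 + (\<Sum>j\<in>{1..N}. \<Sum>k\<in>{1..N}.
        2 * (Pc Q i j k p * ts2 p * v i p) * inner (energy_map \<sigma> \<xi>1 \<xi>2 c (jet (v j) p)) (energy_map \<sigma> \<xi>1 \<xi>2 c (jet (v k) p)))"
proof -
  let ?L = "energy_map \<sigma> \<xi>1 \<xi>2 c"
  define T where "T a j k = Pc Q i j k p * ts2 p * v i p * (pd 0 (v j) p * pd a (v k) p + pd 0 (v k) p * pd a (v j) p)"
    for a j k
  define T0 where "T0 j k = Pc Q i j k p * ts2 p * v i p *
    (pd 0 (v j) p * pd 0 (v k) p + (\<Sum>a\<in>{1,2}. pd a (v j) p * pd a (v k) p) + c^2 * v j p * v k p)" for j k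
  have "2 * (Pc Q i j k p * ts2 p * v i p) * inner (?L (jet (v j) p)) (?L (jet (v k) p))
    = 2 * T0 j k + 2 * \<xi>1 * T 1 j k + 2 * \<xi>2 * T 2 j k" for j k
    unfolding jet_def inner_energy_map[OF assms(1)] T_def T0_def by (simp add: algebra_simps)
  then have "(\<Sum>j\<in>{1..N}. \<Sum>k\<in>{1..N}. 2 * (Pc Q i j k p * ts2 p * v i p) * inner (?L (jet (v j) p)) (?L (jet (v k) p)))
    = 2 * (\<Sum>j\<in>{1..N}. \<Sum>k\<in>{1..N}. T0 j k) + 2 * \<xi>1 * (\<Sum>j\<in>{1..N}. \<Sum>k\<in>{1..N}. T 1 j k)
      + 2 * \<xi>2 * (\<Sum>j\<in>{1..N}. \<Sum>k\<in>{1..N}. T 2 j k)"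
    by (simp add: sum.distrib sum_distrib_left)
  moreover have "(norm (?L (jet (wf N v Q i) p)))^2 = (\<Sum>\<alpha>\<in>{0,1,2}. (pd \<alpha> (wf N v Q i) p)^2)
    + c^2 * (wf N v Q i p)^2 + 2 * \<xi>1 * (pd 0 (wf N v Q i) p * pd 1 (wf N v Q i) p)
    + 2 * \<xi>2 * (pd 0 (wf N v Q i) p * pd 2 (wf N v Q i) p)"
    unfolding power2_norm_eq_inner jet_def inner_energy_map[OF assms(1)] by (simp add: power2_eq_square)
  moreover have "(\<Sum>a\<in>{1,2}. xc a p / tc p * Va N v Q i a p) = \<xi>1 * Va N v Q i 1 p + \<xi>2 * Va N v Q i 2 p"
    by (simp add: assms(2,3))
  ultimately show ?thesis
    unfolding V0_def Va_def T_def[symmetric] T0_def[symmetric] by (simp add: algebra_simps)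
qed

lemma eQc_eq_energy_frame:
  assumes "(sc p / tc p)^2 + (xc 1 p / tc p)^2 + (xc 2 p / tc p)^2 = 1"
  shows "eQc N c Q v p = (\<Sum>i\<in>{1..N}. (norm (energy_frame c p (jet (wf N v Q i) p)))^2
    + (\<Sum>j\<in>{1..N}. \<Sum>k\<in>{1..N}. 2 * (Pc Q i j k p * ts2 p * v i p)
        * inner (energy_frame c p (jet (v j) p)) (energy_frame c p (jet (v k) p))))"
  unfolding eQc_def sum_distrib_left V_combination_eq_energy_map[OF assms refl refl] ..

lemma abs_pd_Pc_ts2_le:
  assumes "p \<in> Kreg s0 s1" "Q i j k differentiable (at p)"
  shows "\<bar>u * pd \<alpha> (\<lambda>q. Pc Q i j k q * ts2 q) p\<bar>
    \<le> (1/3) * \<bar>ts2 p * u * pd \<alpha> (Q i j k) p\<bar> + (2/3) * \<bar>ts2 p * Q i j k p * u\<bar>"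
proof -
  have s2: "s2 p > 0" and ts2: "ts2 p > 0" using Kreg_pos[OF assms(1)] by auto
  have pd_PT: "pd \<alpha> (\<lambda>q. Pc Q i j k q * ts2 q) p = ts2 p * (- (1/3) * pd \<alpha> (Q i j k) p) + Pc Q i j k p * pd \<alpha> ts2 p"
    using pd_mult[OF Pc_differentiable[of Q i j k, OF assms(2)] ts2_differentiable[OF s2]]
      pd_Pc[of Q i j k, OF assms(2)]
    by simp
  have "Pc Q i j k p = - (1/3) * Q i j k p" by (simp add: Pc_def)
  then have "u * pd \<alpha> (\<lambda>q. Pc Q i j k q * ts2 q) p
      = - (1/3) * (ts2 p * u * pd \<alpha> (Q i j k) p) - (1/3) * (Q i j k p * u) * pd \<alpha> ts2 p"
    unfolding pd_PT by (simp add: algebra_simps)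
  then have "\<bar>u * pd \<alpha> (\<lambda>q. Pc Q i j k q * ts2 q) p\<bar>
      \<le> (1/3) * \<bar>ts2 p * u * pd \<alpha> (Q i j k) p\<bar> + (1/3) * \<bar>Q i j k p * u\<bar> * \<bar>pd \<alpha> ts2 p\<bar>"
    using abs_triangle_ineq4[of "- (1/3) * (ts2 p * u * pd \<alpha> (Q i j k) p)" "(1/3) * (Q i j k p * u) * pd \<alpha> ts2 p"]
    by (simp add: abs_mult)
  also have "\<dots> \<le> (1/3) * \<bar>ts2 p * u * pd \<alpha> (Q i j k) p\<bar> + (1/3) * \<bar>Q i j k p * u\<bar> * (2 * ts2 p)"
    using abs_pd_ts2_le[OF assms(1)] by (intro add_left_mono mult_left_mono) auto
  also have "\<dots> = (1/3) * \<bar>ts2 p * u * pd \<alpha> (Q i j k) p\<bar> + (2/3) * \<bar>ts2 p * Q i j k p * u\<bar>"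
    using ts2 by (simp add: abs_mult)
  finally show ?thesis .
qed

context
  fixes N :: nat and c \<epsilon> :: real and p :: pt and s0 s1 :: real
    and v :: "nat \<Rightarrow> pt \<Rightarrow> real" and Q :: "nat \<Rightarrow> nat \<Rightarrow> nat \<Rightarrow> pt \<Rightarrow> real"
  assumes c: "c > 0" and p: "p \<in> Kreg s0 s1" and \<epsilon>: "\<epsilon> \<ge> 0"
    and v_diff: "\<And>j. j \<in> {1..N} \<Longrightarrow> v j differentiable (at p)"
    and Q_diff: "\<And>i j k. i \<in> {1..N} \<Longrightarrow> j \<in> {1..N} \<Longrightarrow> k \<in> {1..N} \<Longrightarrow> Q i j k differentiable (at p)"
    and small: "\<And>i j k m. i \<in> {1..N} \<Longrightarrow> j \<in> {1..N} \<Longrightarrow> k \<in> {1..N} \<Longrightarrow> m \<in> {i, j, k} \<Longrightarrow>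
      \<bar>ts2 p * Q i j k p * v m p\<bar> \<le> \<epsilon>"
    and dsmall: "\<And>i j k \<alpha>. i \<in> {1..N} \<Longrightarrow> j \<in> {1..N} \<Longrightarrow> k \<in> {1..N} \<Longrightarrow> \<alpha> \<in> {0, 1, 2} \<Longrightarrow>
      \<bar>ts2 p * v j p * pd \<alpha> (Q i j k) p\<bar> \<le> \<epsilon>"
begin

lemma frame_bounds:
  "0 \<le> sc p / tc p" "sc p / tc p \<le> 1" "\<bar>xc 1 p / tc p\<bar> \<le> 1" "\<bar>xc 2 p / tc p\<bar> \<le> 1"
proof -
  have "(sc p / tc p)^2 \<le> 1" "(xc 1 p / tc p)^2 \<le> 1" "(xc 2 p / tc p)^2 \<le> 1"
    using Kreg_frame_sq_sum[OF p] zero_le_power2[of "sc p / tc p"]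
      zero_le_power2[of "xc 1 p / tc p"] zero_le_power2[of "xc 2 p / tc p"] by linarith+
  then have "\<bar>sc p / tc p\<bar> \<le> 1" and "\<bar>xc 1 p / tc p\<bar> \<le> 1" "\<bar>xc 2 p / tc p\<bar> \<le> 1"
    by (simp_all only: abs_square_le_1)
  then show "sc p / tc p \<le> 1" and "\<bar>xc 1 p / tc p\<bar> \<le> 1" "\<bar>xc 2 p / tc p\<bar> \<le> 1"
    by (blast dest: abs_le_D1)+
  show "0 \<le> sc p / tc p" using Kreg_pos[OF p] by simp
qed

lemma abs_Pc_ts2_le:
  assumes "i \<in> {1..N}" "j \<in> {1..N}" "k \<in> {1..N}" "m \<in> {i, j, k}"
  shows "\<bar>Pc Q i j k p * ts2 p * v m p\<bar> \<le> \<epsilon> / 3"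
  using small[OF assms] by (simp add: Pc_def abs_mult mult_ac)

lemma norm_scaled_jet_Pc_ts2_le:
  assumes "i \<in> {1..N}" "j \<in> {1..N}" "k \<in> {1..N}"
  shows "\<bar>v j p\<bar> * norm (energy_frame c p (jet (\<lambda>q. Pc Q i j k q * ts2 q) p)) \<le> (5 + c) * \<epsilon>"
proof -
  have pd: "\<bar>v j p * pd \<alpha> (\<lambda>q. Pc Q i j k q * ts2 q) p\<bar> \<le> \<epsilon>" if "\<alpha> \<in> {0, 1, 2}" for \<alpha> :: nat
    using abs_pd_Pc_ts2_le[where u = "v j p" and \<alpha> = \<alpha> and Q = Q and i = i and j = j and k = k, OF p Q_diff[OF assms]]
      dsmall[OF assms that] small[OF assms, of j] by simp
  have "\<bar>v j p\<bar> * norm (energy_frame c p (jet (\<lambda>q. Pc Q i j k q * ts2 q) p))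
      = norm (energy_frame c p (v j p *\<^sub>R jet (\<lambda>q. Pc Q i j k q * ts2 q) p))"
    by (simp add: linear_scale[OF linear_energy_map])
  also have "\<dots> \<le> (5 + c) * \<epsilon>"
    unfolding jet_def scaleR_Pair real_scaleR_def
    by (rule norm_energy_map_le)
      (use frame_bounds c pd[of 0] pd[of 1] pd[of 2] abs_Pc_ts2_le[OF assms, of j] \<epsilon> in \<open>auto simp: mult_ac\<close>)
  finally show ?thesis .
qed

lemma norm_jet_wf_term_le:
  assumes i: "i \<in> {1..N}" and j: "j \<in> {1..N}" and k: "k \<in> {1..N}"
  shows "norm ((Pc Q i j k p * ts2 p * v k p) *\<^sub>R energy_frame c p (djet (v j) p)
      + (Pc Q i j k p * ts2 p * v j p) *\<^sub>R energy_frame c p (djet (v k) p)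
      + (v j p * v k p) *\<^sub>R energy_frame c p (jet (\<lambda>q. Pc Q i j k q * ts2 q) p))
    \<le> \<epsilon> * norm (energy_frame c p (jet (v j) p)) + (5 / c + 2) * \<epsilon> * norm (energy_frame c p (jet (v k) p))"
proof -
  let ?L = "energy_frame c p"
  let ?A = "(Pc Q i j k p * ts2 p * v k p) *\<^sub>R ?L (djet (v j) p)"
  let ?B = "(Pc Q i j k p * ts2 p * v j p) *\<^sub>R ?L (djet (v k) p)"
  let ?C = "(v j p * v k p) *\<^sub>R ?L (jet (\<lambda>q. Pc Q i j k q * ts2 q) p)"
  have djet_le: "norm (?L (djet (v m) p)) \<le> norm (?L (jet (v m) p))" for m
    unfolding jet_def djet_def by (rule norm_energy_map_djet_le)
  have "norm ?A \<le> \<epsilon> * norm (?L (jet (v j) p))"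
    using abs_Pc_ts2_le[OF i j k, of k] djet_le[of j] \<epsilon> by (auto intro: mult_mono)
  moreover have "norm ?B \<le> \<epsilon> * norm (?L (jet (v k) p))"
    using abs_Pc_ts2_le[OF i j k, of j] djet_le[of k] \<epsilon> by (auto intro: mult_mono)
  moreover have "norm ?C = \<bar>v k p\<bar> * (\<bar>v j p\<bar> * norm (?L (jet (\<lambda>q. Pc Q i j k q * ts2 q) p)))"
    by (simp add: abs_mult mult_ac)
  moreover have "\<dots> \<le> \<bar>v k p\<bar> * ((5 + c) * \<epsilon>)"
    using norm_scaled_jet_Pc_ts2_le[OF i j k] by (intro mult_left_mono) auto
  moreover have "\<bar>v k p\<bar> * ((5 + c) * \<epsilon>) = (5 / c + 1) * \<epsilon> * (c * \<bar>v k p\<bar>)"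
    using c by (simp add: field_simps)
  moreover have "c * \<bar>v k p\<bar> \<le> norm (?L (jet (v k) p))"
    unfolding jet_def using c by (intro abs_le_norm_energy_map) simp
  then have "(5 / c + 1) * \<epsilon> * (c * \<bar>v k p\<bar>) \<le> (5 / c + 1) * \<epsilon> * norm (?L (jet (v k) p))"
    using c \<epsilon> by (intro mult_left_mono) auto
  moreover have "norm (?A + ?B + ?C) \<le> norm ?A + norm ?B + norm ?C"
    using norm_triangle_ineq[of "?A + ?B" ?C] norm_triangle_ineq[of ?A ?B] by linarith
  moreover have "(5 / c + 2) * \<epsilon> * norm (?L (jet (v k) p))
    = \<epsilon> * norm (?L (jet (v k) p)) + (5 / c + 1) * \<epsilon> * norm (?L (jet (v k) p))"
    by (simp add: algebra_simps)
  ultimately show ?thesis by linarith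
qed

lemma norm_jet_wf_diff_le:
  assumes i: "i \<in> {1..N}"
  shows "norm (energy_frame c p (jet (wf N v Q i) p) - energy_frame c p (jet (v i) p))
    \<le> ((5 / c + 3) * \<epsilon> * N) * (\<Sum>j\<in>{1..N}. norm (energy_frame c p (jet (v j) p)))"
proof -
  let ?L = "energy_frame c p"
  have "jet (wf N v Q i) p = jet (v i) p + (\<Sum>j\<in>{1..N}. \<Sum>k\<in>{1..N}.
      (Pc Q i j k p * ts2 p * v k p) *\<^sub>R djet (v j) p + (Pc Q i j k p * ts2 p * v j p) *\<^sub>R djet (v k) p
      + (v j p * v k p) *\<^sub>R jet (\<lambda>q. Pc Q i j k q * ts2 q) p)"
    by (rule jet_wf) (use Kreg_pos(2)[OF p] v_diff Q_diff[OF i] i in auto)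
  then have diff_eq: "?L (jet (wf N v Q i) p) - ?L (jet (v i) p) = (\<Sum>j\<in>{1..N}. \<Sum>k\<in>{1..N}.
      (Pc Q i j k p * ts2 p * v k p) *\<^sub>R ?L (djet (v j) p) + (Pc Q i j k p * ts2 p * v j p) *\<^sub>R ?L (djet (v k) p)
      + (v j p * v k p) *\<^sub>R ?L (jet (\<lambda>q. Pc Q i j k q * ts2 q) p))"
    by (simp only: linear_add[OF linear_energy_map] linear_sum[OF linear_energy_map]
        linear_scale[OF linear_energy_map] o_def add_diff_cancel_left')
  have "norm (?L (jet (wf N v Q i) p) - ?L (jet (v i) p))
    \<le> (\<epsilon> + (5 / c + 2) * \<epsilon>) * card {1..N} * (\<Sum>j\<in>{1..N}. norm (?L (jet (v j) p)))"
    unfolding diff_eq by (rule norm_double_sum_le[OF finite_atLeastAtMost]) (rule norm_jet_wf_term_le[OF i])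
  also have "\<epsilon> + (5 / c + 2) * \<epsilon> = (5 / c + 3) * \<epsilon>" by (simp add: algebra_simps)
  finally show ?thesis by simp
qed

lemma energy_equiv_at_point:
  assumes "8 * (5 / c + 3) * (real N)^2 * \<epsilon> \<le> 1"
  shows "(1/4) * eQc N c Q v p \<le> (\<Sum>i\<in>{1..N}. ec c (v i) p)
    \<and> (\<Sum>i\<in>{1..N}. ec c (v i) p) \<le> 4 * eQc N c Q v p"
proof -
  let ?Z = "\<lambda>j. energy_frame c p (jet (v j) p)"
  have "\<bar>2 * (Pc Q i j k p * ts2 p * v i p)\<bar> \<le> \<epsilon>" if "i \<in> {1..N}" "j \<in> {1..N}" "k \<in> {1..N}" for i j k
    using abs_Pc_ts2_le[OF that, of i] \<epsilon> by simp
  then have B: "\<bar>\<Sum>j\<in>{1..N}. \<Sum>k\<in>{1..N}. 2 * (Pc Q i j k p * ts2 p * v i p) * inner (?Z j) (?Z k)\<bar>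
      \<le> \<epsilon> * (\<Sum>j\<in>{1..N}. norm (?Z j))^2" if "i \<in> {1..N}" for i
    using that by (intro abs_double_sum_inner_le) auto
  have "1 \<le> 5 / c + 3" using c by simp
  then have "8 * (real N)^2 * \<epsilon> * 1 \<le> 8 * (real N)^2 * \<epsilon> * (5 / c + 3)"
    using \<epsilon> by (intro mult_left_mono) auto
  then have card2: "8 * (card {1..N})^2 * \<epsilon> \<le> 1" using assms by (simp add: algebra_simps)
  have card1: "8 * card {1..N} * ((5 / c + 3) * \<epsilon> * N) \<le> 1"
    using assms by (simp add: power2_eq_square algebra_simps)
  have "0 \<le> (5 / c + 3) * \<epsilon> * N" using c \<epsilon> by simp
  from energy_equiv_of_small_perturbation[OF finite_atLeastAtMost this card1 \<epsilon> card2 norm_jet_wf_diff_le B]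
  show ?thesis unfolding eQc_eq_energy_frame[OF Kreg_frame_sq_sum[OF p]] ec_eq_norm_energy_frame .
qed

end

lemma energy_equiv_of_small_data:
  fixes N :: nat and c \<epsilon> :: real
  assumes c: "c > 0" and \<epsilon>: "0 \<le> \<epsilon>" "8 * (5 / c + 3) * (real N)^2 * \<epsilon> \<le> 1"
    and v: "\<forall>i\<in>{1..N}. \<forall>p\<in>Kreg s0 s1. v i differentiable (at p)"
    and Q: "\<forall>i\<in>{1..N}. \<forall>j\<in>{1..N}. \<forall>k\<in>{1..N}. \<forall>p\<in>Kreg s0 s1. Q i j k differentiable (at p)"
    and small: "\<forall>i\<in>{1..N}. \<forall>j\<in>{1..N}. \<forall>k\<in>{1..N}. \<forall>p\<in>Kreg s0 s1.
      \<bar>ts2 p * Q i j k p * v i p\<bar> + \<bar>ts2 p * Q i j k p * v j p\<bar> + \<bar>ts2 p * Q i j k p * v k p\<bar> \<le> \<epsilon>"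
    and dsmall: "\<forall>i\<in>{1..N}. \<forall>j\<in>{1..N}. \<forall>k\<in>{1..N}. \<forall>\<alpha>\<in>{0,1,2}. \<forall>p\<in>Kreg s0 s1.
      \<bar>ts2 p * v j p * pd \<alpha> (Q i j k) p\<bar> + \<bar>ts2 p * v k p * pd \<alpha> (Q i j k) p\<bar> \<le> \<epsilon>"
    and p: "p \<in> Kreg s0 s1"
  shows "(1/4) * eQc N c Q v p \<le> (\<Sum>i\<in>{1..N}. ec c (v i) p) \<and>
    (\<Sum>i\<in>{1..N}. ec c (v i) p) \<le> 4 * eQc N c Q v p"
proof (rule energy_equiv_at_point[OF c p \<epsilon>(1) _ _ _ _ \<epsilon>(2)])
  fix i j k m assume ijk: "i \<in> {1..N}" "j \<in> {1..N}" "k \<in> {1..N}" and m: "m \<in> {i, j, k}"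
  have "\<bar>ts2 p * Q i j k p * v i p\<bar> + \<bar>ts2 p * Q i j k p * v j p\<bar> + \<bar>ts2 p * Q i j k p * v k p\<bar> \<le> \<epsilon>"
    using small p ijk by blast
  then have "\<bar>ts2 p * Q i j k p * v i p\<bar> \<le> \<epsilon>" "\<bar>ts2 p * Q i j k p * v j p\<bar> \<le> \<epsilon>"
    "\<bar>ts2 p * Q i j k p * v k p\<bar> \<le> \<epsilon>"
    by linarith+
  then show "\<bar>ts2 p * Q i j k p * v m p\<bar> \<le> \<epsilon>" using m by auto
next
  fix i j k \<alpha> :: nat assume "i \<in> {1..N}" "j \<in> {1..N}" "k \<in> {1..N}" "\<alpha> \<in> {0, 1, 2}"
  then have "\<bar>ts2 p * v j p * pd \<alpha> (Q i j k) p\<bar> + \<bar>ts2 p * v k p * pd \<alpha> (Q i j k) p\<bar> \<le> \<epsilon>"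
    using dsmall p by blast
  then show "\<bar>ts2 p * v j p * pd \<alpha> (Q i j k) p\<bar> \<le> \<epsilon>" by linarith
qed (use v Q p in auto)

theorem lemma3p1:
  fixes N :: nat and c :: real
  assumes "N \<ge> 1" and "c > 0"
  shows "\<exists>\<epsilon>>0. \<forall>(s0::real) (s1::real) (v :: nat \<Rightarrow> pt \<Rightarrow> real) (Q :: nat \<Rightarrow> nat \<Rightarrow> nat \<Rightarrow> pt \<Rightarrow> real).
     (\<forall>i\<in>{1..N}. \<forall>p\<in>Kreg s0 s1. v i differentiable (at p)) \<longrightarrow>
     (\<forall>i\<in>{1..N}. \<forall>j\<in>{1..N}. \<forall>k\<in>{1..N}. \<forall>p\<in>Kreg s0 s1. Q i j k differentiable (at p)) \<longrightarrow>
     (\<forall>i\<in>{1..N}. \<forall>j\<in>{1..N}. \<forall>k\<in>{1..N}. \<forall>p\<in>Kreg s0 s1. Q i j k p = Q i k j p) \<longrightarrow>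
     (\<forall>i\<in>{1..N}. \<forall>j\<in>{1..N}. \<forall>k\<in>{1..N}. \<forall>p\<in>Kreg s0 s1.
        \<bar>ts2 p * Q i j k p * v i p\<bar> + \<bar>ts2 p * Q i j k p * v j p\<bar> + \<bar>ts2 p * Q i j k p * v k p\<bar> \<le> \<epsilon>) \<longrightarrow>
     (\<forall>i\<in>{1..N}. \<forall>j\<in>{1..N}. \<forall>k\<in>{1..N}. \<forall>\<alpha>\<in>{0,1,2}. \<forall>p\<in>Kreg s0 s1.
        \<bar>ts2 p * v j p * pd \<alpha> (Q i j k) p\<bar> + \<bar>ts2 p * v k p * pd \<alpha> (Q i j k) p\<bar> \<le> \<epsilon>) \<longrightarrow>
     (\<forall>p\<in>Kreg s0 s1.
        (1/4) * eQc N c Q v p \<le> (\<Sum>i\<in>{1..N}. ec c (v i) p) \<and>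
        (\<Sum>i\<in>{1..N}. ec c (v i) p) \<le> 4 * eQc N c Q v p)"
proof -
  define \<epsilon> where "\<epsilon> = 1 / (8 * (5 / c + 3) * (real N)^2)"
  have "0 < 8 * (5 / c + 3) * (real N)^2" using assms by (simp add: add_pos_pos)
  then have "\<epsilon> > 0" and \<epsilon>: "8 * (5 / c + 3) * (real N)^2 * \<epsilon> \<le> 1" by (simp_all add: \<epsilon>_def)
  show ?thesis
    by (intro exI[of _ \<epsilon>] conjI[OF \<open>\<epsilon> > 0\<close>] allI impI ballI,
        rule energy_equiv_of_small_data[OF \<open>c > 0\<close> less_imp_le[OF \<open>\<epsilon> > 0\<close>] \<epsilon>])
      (assumption+)
qed

end
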